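(* For an integer $p\ge4$, let $G^I_p$ be the graph with vertex set $\{v_0,\dots,v_{p-1}\}$ and edge set $\{v_0v_3\}\cup\{v_iv_{i+1}: 0\le i\le p-2\}\cup\{v_iv_{i+2}:0\le i\le p-3\}$. If $p=4q+4$ with $q$ a nonnegative integer, then the contracted solution graph $\mathcal{C}^c_4(G^I_p,\{v_{p-2},v_{p-1}\})$ has (at least) $4!$ components each having at least $2^q$ nodes.
   Context: A $k$-coloring of $G$ is a map $\alpha:V(G)\to\{1,\dots,k\}$ with $\alpha(u)\ne\alpha(v)$ for all edges $uv$. The $k$-color graph $\mathcal{C}_k(G)$ has the $k$-colorings of $G$ as nodes, two adjacent iff they differ on exactly one vertex. For $T\subseteq V(G)$, each $k$-coloring $\gamma$ gets label $\gamma|_T$; a label component is a maximal set of $k$-colorings with the same label inducing a connected subgraph of $\mathcal{C}_k(G)$. The contracted solution graph $\mathcal{C}^c_k(G,T)$ is the labeled graph whose nodes correspond bijectively to the label components, distinct nodes adjacent iff some coloring in one component is adjacent in $\mathcal{C}_k(G)$ to some coloring in the other, each node labeled with the common label of its component. *)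

theory Defs
  imports Main "HOL-Library.FuncSet"
begin

definition colorings :: "'v set \<Rightarrow> 'v set set \<Rightarrow> nat \<Rightarrow> ('v \<Rightarrow> nat) set" where
  "colorings V E k = {\<alpha> \<in> V \<rightarrow>\<^sub>E {1..k}. \<forall>u v. {u, v} \<in> E \<longrightarrow> \<alpha> u \<noteq> \<alpha> v}"

definition color_adj :: "'v set \<Rightarrow> 'v set set \<Rightarrow> nat \<Rightarrow> ('v \<Rightarrow> nat) rel" where
  "color_adj V E k = {(\<alpha>, \<beta>). \<alpha> \<in> colorings V E k \<and> \<beta> \<in> colorings V E k
      \<and> card {v \<in> V. \<alpha> v \<noteq> \<beta> v} = 1}"

definition graph_components :: "'a set \<Rightarrow> 'a rel \<Rightarrow> 'a set set" where
  "graph_components N A = N // ((A \<inter> (N \<times> N))\<^sup>*)"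

text \<open>Label components: components of the subgraph of the k-color graph
  keeping only edges between colorings with the same label (restriction to T).\<close>
definition label_components :: "'v set \<Rightarrow> 'v set set \<Rightarrow> nat \<Rightarrow> 'v set \<Rightarrow> ('v \<Rightarrow> nat) set set" where
  "label_components V E k T = graph_components (colorings V E k)
      {(\<alpha>, \<beta>) \<in> color_adj V E k. restrict \<alpha> T = restrict \<beta> T}"

text \<open>Contracted solution graph: nodes are label components; distinct nodes adjacent iff
  some colorings in them are adjacent in the k-color graph.  (Labels are not needed
  for counting components.)\<close>
definition contracted_adj :: "'v set \<Rightarrow> 'v set set \<Rightarrow> nat \<Rightarrow> 'v set \<Rightarrow> ('v \<Rightarrow> nat) set rel" where
  "contracted_adj V E k T = {(C, D). C \<in> label_components V E k T \<and> D \<in> label_components V E k T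
      \<and> C \<noteq> D \<and> (\<exists>\<alpha>\<in>C. \<exists>\<beta>\<in>D. (\<alpha>, \<beta>) \<in> color_adj V E k)}"

definition contracted_components :: "'v set \<Rightarrow> 'v set set \<Rightarrow> nat \<Rightarrow> 'v set \<Rightarrow> ('v \<Rightarrow> nat) set set set" where
  "contracted_components V E k T =
     graph_components (label_components V E k T) (contracted_adj V E k T)"

text \<open>The graph G^I_p on vertices v_0..v_{p-1}, vertex v_i represented by i.\<close>
definition GI_vertices :: "nat \<Rightarrow> nat set" where
  "GI_vertices p = {0..<p}"

definition GI_edges :: "nat \<Rightarrow> nat set set" where
  "GI_edges p = {{0, 3}} \<union> {{i, i + 1} | i. i + 1 < p} \<union> {{i, i + 2} | i. i + 2 < p}"

end

theory Submission
  imports Defs "HOL-Combinatorics.Multiset_Permutations"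
begin

text \<open>The vertices \<open>v\<^sub>0, \<dots>, v\<^sub>3\<close> form a clique, so in every 4-coloring they carry a
  permutation of the four colors and can never be recolored; hence the \<open>4!\<close> permutations lie in
  pairwise different components of the contracted solution graph. On the other hand, two colorings with
  the same permutation are connected in the color graph: make the coloring periodic beyond
  \<open>v\<^sub>j\<close>, after which \<open>v\<^sub>j\<close> can be recolored freely.

  Inside the component of a fixed permutation we exhibit \<open>2\<^sup>q\<close> frozen colorings: at each vertex
  \<open>k \<ge> 4\<close> either repeat the color of \<open>v\<^sub>k\<^sub>-\<^sub>3\<close> (for \<open>k\<close> in a set \<open>w\<close> without consecutive
  elements) or use the color missing from \<open>v\<^sub>k\<^sub>-\<^sub>3, v\<^sub>k\<^sub>-\<^sub>2, v\<^sub>k\<^sub>-\<^sub>1\<close>. Then every vertex other than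
  \<open>v\<^sub>p\<^sub>-\<^sub>2, v\<^sub>p\<^sub>-\<^sub>1\<close> sees all four colors in its closed neighborhood, so each such coloring is a
  label component of its own, and different sets \<open>w\<close> give different colorings.\<close>

definition component_of :: "'a set \<Rightarrow> 'a rel \<Rightarrow> 'a \<Rightarrow> 'a set" where
  "component_of N A x = (A \<inter> N \<times> N)\<^sup>* `` {x}"

lemma component_of_in_graph_components: "x \<in> N \<Longrightarrow> component_of N A x \<in> graph_components N A"
  unfolding component_of_def graph_components_def by (rule quotientI)

lemma graph_componentsE:
  assumes "X \<in> graph_components N A"
  obtains x where "x \<in> N" "X = component_of N A x"
  using assms unfolding graph_components_def component_of_def by (blast elim: quotientE)

lemma self_in_component_of: "x \<in> component_of N A x"
  unfolding component_of_def by blast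

lemma component_of_subset:
  assumes "x \<in> N" shows "component_of N A x \<subseteq> N"
proof
  fix y assume "y \<in> component_of N A x"
  then have "(x, y) \<in> (A \<inter> N \<times> N)\<^sup>*" by (simp add: component_of_def)
  then show "y \<in> N" by (induction rule: rtrancl_induct) (use assms in auto)
qed

lemma graph_components_subset_Pow: "graph_components N A \<subseteq> Pow N"
  by (auto elim!: graph_componentsE dest: component_of_subset)

lemma finite_graph_components: "finite N \<Longrightarrow> finite (graph_components N A)"
  using graph_components_subset_Pow by (metis finite_Pow_iff finite_subset)

lemma component_of_invariant:
  assumes f: "\<And>x y. (x, y) \<in> A \<Longrightarrow> x \<in> N \<Longrightarrow> y \<in> N \<Longrightarrow> f x = f y"
    and y: "y \<in> component_of N A x"
  shows "f y = f x"
proof -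
  from y have "(x, y) \<in> (A \<inter> N \<times> N)\<^sup>*" by (simp add: component_of_def)
  then show ?thesis by (induction rule: rtrancl_induct) (auto dest: f)
qed

lemma component_of_isolated:
  assumes "\<And>y. (x, y) \<in> A \<Longrightarrow> y \<in> N \<Longrightarrow> False"
  shows "component_of N A x = {x}"
proof -
  have "y = x" if "(x, y) \<in> (A \<inter> N \<times> N)\<^sup>*" for y
    using that by (cases rule: converse_rtranclE) (auto dest: assms)
  then show ?thesis by (auto simp: component_of_def)
qed

lemma coloringsD:
  assumes "\<alpha> \<in> colorings V E k"
  shows "\<alpha> \<in> V \<rightarrow>\<^sub>E {1..k}" and "{u, v} \<in> E \<Longrightarrow> \<alpha> u \<noteq> \<alpha> v"
  using assms by (auto simp: colorings_def)

lemma finite_colorings: "finite V \<Longrightarrow> finite (colorings V E k)"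
  by (rule finite_subset[of _ "V \<rightarrow>\<^sub>E {1..k}"]) (auto simp: colorings_def intro: finite_PiE)

lemma color_adj_colorings: "(\<alpha>, \<beta>) \<in> color_adj V E k \<Longrightarrow> \<alpha> \<in> colorings V E k \<and> \<beta> \<in> colorings V E k"
  by (simp add: color_adj_def)

lemma color_adj_unique_diff:
  assumes "(\<alpha>, \<beta>) \<in> color_adj V E k"
  obtains v where "v \<in> V" "\<alpha> v \<noteq> \<beta> v" "\<And>u. u \<noteq> v \<Longrightarrow> \<alpha> u = \<beta> u"
proof -
  have "card {v \<in> V. \<alpha> v \<noteq> \<beta> v} = 1" using assms by (simp add: color_adj_def)
  then obtain v where v: "{v \<in> V. \<alpha> v \<noteq> \<beta> v} = {v}" by (rule card_1_singletonE)
  have "\<alpha> u = \<beta> u" if "u \<noteq> v" for u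
  proof (cases "u \<in> V")
    case False
    with assms show ?thesis by (metis PiE_arb color_adj_colorings coloringsD(1))
  qed (use v that in blast)
  moreover have "v \<in> V" "\<alpha> v \<noteq> \<beta> v" using v by auto
  ultimately show ?thesis using that by blast
qed

lemma color_adj_locked:
  assumes adj: "(\<alpha>, \<beta>) \<in> color_adj V E k"
    and cover: "{1..k} \<subseteq> insert (\<alpha> v) (\<alpha> ` N)" and nbrs: "\<And>u. u \<in> N \<Longrightarrow> {u, v} \<in> E"
  shows "\<alpha> v = \<beta> v"
proof (rule ccontr)
  assume ne: "\<alpha> v \<noteq> \<beta> v"
  obtain v' where "v' \<in> V" "\<alpha> v' \<noteq> \<beta> v'" "\<And>u. u \<noteq> v' \<Longrightarrow> \<alpha> u = \<beta> u"
    using color_adj_unique_diff[OF adj] by blast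
  with ne have v: "v \<in> V" and same: "\<And>u. u \<noteq> v \<Longrightarrow> \<alpha> u = \<beta> u" by metis+
  have \<beta>: "\<beta> \<in> colorings V E k" using adj by (simp add: color_adj_def)
  have "\<beta> v \<in> {1..k}" using PiE_mem[OF coloringsD(1)[OF \<beta>] v] .
  with cover ne obtain u where "u \<in> N" "\<beta> v = \<alpha> u" by auto
  moreover from this ne have "u \<noteq> v" by auto
  ultimately have "\<beta> u = \<beta> v" using same by metis
  with \<beta> nbrs[OF \<open>u \<in> N\<close>] show False by (auto dest: coloringsD(2))
qed

lemma colorings_fun_upd:
  assumes \<alpha>: "\<alpha> \<in> colorings V E k" and "v \<in> V" "c \<in> {1..k}"
    and free: "\<And>u. {u, v} \<in> E \<Longrightarrow> \<alpha> u \<noteq> c"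
  shows "\<alpha>(v := c) \<in> colorings V E k"
proof -
  have "\<alpha>(v := c) \<in> V \<rightarrow>\<^sub>E {1..k}"
    using PiE_fun_upd[of c "\<lambda>_. {1..k}" v \<alpha> V] coloringsD(1)[OF \<alpha>] assms(2,3)
    by (simp add: insert_absorb)
  moreover have "(\<alpha>(v := c)) x \<noteq> (\<alpha>(v := c)) y" if xy: "{x, y} \<in> E" for x y
  proof -
    have "x \<noteq> y" using coloringsD(2)[OF \<alpha> xy] by auto
    moreover have "{y, x} \<in> E" using xy by (simp add: insert_commute)
    ultimately show ?thesis
      using free[of x] free[of y] coloringsD(2)[OF \<alpha> xy] xy by auto
  qed
  ultimately show ?thesis by (simp add: colorings_def)
qed

lemma color_adj_fun_upd:
  assumes "\<alpha> \<in> colorings V E k" "\<alpha>(v := c) \<in> colorings V E k" "v \<in> V" "\<alpha> v \<noteq> c"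
  shows "(\<alpha>, \<alpha>(v := c)) \<in> color_adj V E k"
proof -
  have "{u \<in> V. \<alpha> u \<noteq> (\<alpha>(v := c)) u} = {v}" using assms(3,4) by auto
  with assms show ?thesis by (simp add: color_adj_def)
qed

definition label_adj :: "'v set \<Rightarrow> 'v set set \<Rightarrow> nat \<Rightarrow> 'v set \<Rightarrow> ('v \<Rightarrow> nat) rel" where
  "label_adj V E k T = {(\<alpha>, \<beta>) \<in> color_adj V E k. restrict \<alpha> T = restrict \<beta> T}"

definition label_component_of ::
    "'v set \<Rightarrow> 'v set set \<Rightarrow> nat \<Rightarrow> 'v set \<Rightarrow> ('v \<Rightarrow> nat) \<Rightarrow> ('v \<Rightarrow> nat) set" where
  "label_component_of V E k T \<alpha> = component_of (colorings V E k) (label_adj V E k T) \<alpha>"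

definition contracted_component_of ::
    "'v set \<Rightarrow> 'v set set \<Rightarrow> nat \<Rightarrow> 'v set \<Rightarrow> ('v \<Rightarrow> nat) \<Rightarrow> ('v \<Rightarrow> nat) set set" where
  "contracted_component_of V E k T \<alpha> =
     component_of (label_components V E k T) (contracted_adj V E k T) (label_component_of V E k T \<alpha>)"

lemma label_components_eq: "label_components V E k T = graph_components (colorings V E k) (label_adj V E k T)"
  by (simp add: label_components_def label_adj_def)

lemma label_component_of_in_label_components:
  "\<alpha> \<in> colorings V E k \<Longrightarrow> label_component_of V E k T \<alpha> \<in> label_components V E k T"
  by (simp add: label_component_of_def label_components_eq component_of_in_graph_components)

lemma contracted_component_of_in_contracted_components:
  "\<alpha> \<in> colorings V E k \<Longrightarrow> contracted_component_of V E k T \<alpha> \<in> contracted_components V E k T"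
  by (simp add: contracted_component_of_def contracted_components_def
      component_of_in_graph_components label_component_of_in_label_components)

lemma finite_contracted_components:
  assumes "finite V"
  shows "finite (contracted_components V E k T)"
    and "X \<in> contracted_components V E k T \<Longrightarrow> finite X"
proof -
  have "finite (label_components V E k T)"
    by (simp add: assms label_components_eq finite_graph_components finite_colorings)
  then show "finite (contracted_components V E k T)"
    by (simp add: contracted_components_def finite_graph_components)
  show "X \<in> contracted_components V E k T \<Longrightarrow> finite X"
    using \<open>finite (label_components V E k T)\<close> graph_components_subset_Pow
    unfolding contracted_components_def by (meson PowD finite_subset subsetD)
qed

lemma label_component_of_isolated:
  assumes "\<And>\<beta>. (\<alpha>, \<beta>) \<in> color_adj V E k \<Longrightarrow> restrict \<alpha> T = restrict \<beta> T \<Longrightarrow> False"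
  shows "label_component_of V E k T \<alpha> = {\<alpha>}"
  unfolding label_component_of_def using assms
  by (intro component_of_isolated) (auto simp: label_adj_def)

lemma label_component_of_in_contracted_component_of:
  assumes path: "(\<alpha>, \<beta>) \<in> (color_adj V E k)\<^sup>*" and \<alpha>: "\<alpha> \<in> colorings V E k"
  shows "label_component_of V E k T \<beta> \<in> contracted_component_of V E k T \<alpha>"
  using path
proof (induction rule: rtrancl_induct)
  case base
  show ?case by (simp add: contracted_component_of_def self_in_component_of)
next
  case (step \<gamma> \<delta>)
  let ?lc = "label_component_of V E k T" and ?LC = "label_components V E k T"
  have "\<gamma> \<in> colorings V E k" "\<delta> \<in> colorings V E k" using step.hyps(2) by (simp_all add: color_adj_def)
  then have "?lc \<gamma> \<in> ?LC" "?lc \<delta> \<in> ?LC" by (simp_all add: label_component_of_in_label_components)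
  moreover have "\<gamma> \<in> ?lc \<gamma>" "\<delta> \<in> ?lc \<delta>" by (simp_all add: label_component_of_def self_in_component_of)
  ultimately have "?lc \<gamma> = ?lc \<delta> \<or> (?lc \<gamma>, ?lc \<delta>) \<in> contracted_adj V E k T \<inter> ?LC \<times> ?LC"
    using step.hyps(2) by (auto simp: contracted_adj_def)
  with step.IH show ?case
    by (auto simp: contracted_component_of_def component_of_def intro: rtrancl_into_rtrancl)
qed

lemma contracted_component_of_invariant:
  assumes f: "\<And>\<alpha> \<beta>. (\<alpha>, \<beta>) \<in> color_adj V E k \<Longrightarrow> f \<alpha> = f \<beta>"
    and \<alpha>: "\<alpha> \<in> colorings V E k" and \<beta>: "\<beta> \<in> colorings V E k"
    and eq: "contracted_component_of V E k T \<alpha> = contracted_component_of V E k T \<beta>"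
  shows "f \<alpha> = f \<beta>"
proof -
  let ?lc = "label_component_of V E k T" and ?LC = "label_components V E k T"
  have image_lc_of: "f ` ?lc \<gamma> = {f \<gamma>}" for \<gamma>
  proof -
    have "f \<delta> = f \<gamma>" if "\<delta> \<in> ?lc \<gamma>" for \<delta>
      using that unfolding label_component_of_def
      by (rule component_of_invariant[rotated]) (auto simp: label_adj_def intro: f)
    moreover have "\<gamma> \<in> ?lc \<gamma>" by (simp add: label_component_of_def self_in_component_of)
    ultimately show ?thesis by blast
  qed
  have image_lc: "f ` D = {f \<gamma>}" if D: "D \<in> ?LC" and \<gamma>: "\<gamma> \<in> D" for D \<gamma>
  proof -
    obtain \<gamma>' where "D = ?lc \<gamma>'"
      using D unfolding label_components_eq label_component_of_def by (blast elim: graph_componentsE)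
    then have "f ` D = {f \<gamma>'}" by (simp add: image_lc_of)
    moreover from \<gamma> have "f \<gamma> \<in> f ` D" by (rule imageI)
    ultimately show ?thesis by simp
  qed
  have "f ` D1 = f ` D2" if adj: "(D1, D2) \<in> contracted_adj V E k T" for D1 D2
  proof -
    obtain \<gamma>1 \<gamma>2 where "D1 \<in> ?LC" "D2 \<in> ?LC" "\<gamma>1 \<in> D1" "\<gamma>2 \<in> D2" and "(\<gamma>1, \<gamma>2) \<in> color_adj V E k"
      using adj unfolding contracted_adj_def by blast
    then have "f ` D1 = {f \<gamma>1}" "f ` D2 = {f \<gamma>2}" "f \<gamma>1 = f \<gamma>2" by (simp_all add: image_lc f)
    then show ?thesis by simp
  qed
  moreover have "?lc \<beta> \<in> contracted_component_of V E k T \<alpha>"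
    using eq by (simp add: contracted_component_of_def self_in_component_of)
  ultimately have "f ` ?lc \<beta> = f ` ?lc \<alpha>"
    unfolding contracted_component_of_def by (rule component_of_invariant)
  then show ?thesis by (simp add: image_lc_of)
qed

lemma GI_edges_iff:
  assumes "4 \<le> p"
  shows "{u, v} \<in> GI_edges p \<longleftrightarrow> u < p \<and> v < p \<and>
    ({u, v} = {0, 3} \<or> v = u + 1 \<or> u = v + 1 \<or> v = u + 2 \<or> u = v + 2)"
  using assms unfolding GI_edges_def by (auto simp: doubleton_eq_iff)

lemma GI_edges_prefix_clique: "4 \<le> p \<Longrightarrow> i < 4 \<Longrightarrow> j < 4 \<Longrightarrow> i \<noteq> j \<Longrightarrow> {i, j} \<in> GI_edges p"
  by (simp add: GI_edges_iff doubleton_eq_iff) presburger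

lemma GI_edges_upper:
  "4 \<le> p \<Longrightarrow> 4 \<le> v \<Longrightarrow> {u, v} \<in> GI_edges p \<longleftrightarrow> u < p \<and> v < p \<and> u \<in> {v - 2, v - 1, v + 1, v + 2}"
  by (auto simp: GI_edges_iff doubleton_eq_iff)

abbreviation GI_colorings :: "nat \<Rightarrow> (nat \<Rightarrow> nat) set" where
  "GI_colorings p \<equiv> colorings (GI_vertices p) (GI_edges p) 4"

abbreviation GI_color_adj :: "nat \<Rightarrow> (nat \<Rightarrow> nat) rel" where
  "GI_color_adj p \<equiv> color_adj (GI_vertices p) (GI_edges p) 4"

lemma GI_colorings_prefix_colors:
  assumes p: "4 \<le> p" and \<alpha>: "\<alpha> \<in> GI_colorings p"
  shows "\<alpha> ` {0..<4} = {1..4}"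
proof (rule card_subset_eq)
  have "inj_on \<alpha> {0..<4}"
    using coloringsD(2)[OF \<alpha> GI_edges_prefix_clique[OF p]] by (intro inj_onI) fastforce
  then show "card (\<alpha> ` {0..<4}) = card {1..4::nat}" by (simp add: card_image)
  show "\<alpha> ` {0..<4} \<subseteq> {1..4}"
    using coloringsD(1)[OF \<alpha>] p by (auto simp: GI_vertices_def)
qed simp

lemma GI_color_adj_prefix:
  assumes p: "4 \<le> p" and adj: "(\<alpha>, \<beta>) \<in> GI_color_adj p" and "v < 4"
  shows "\<alpha> v = \<beta> v"
proof (rule color_adj_locked[OF adj])
  have "\<alpha> \<in> GI_colorings p" using adj by (simp add: color_adj_def)
  then show "{1..4} \<subseteq> insert (\<alpha> v) (\<alpha> ` ({0..<4} - {v}))"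
    using GI_colorings_prefix_colors[OF p] \<open>v < 4\<close> by blast
  show "{u, v} \<in> GI_edges p" if "u \<in> {0..<4} - {v}" for u
    using that \<open>v < 4\<close> by (auto intro: GI_edges_prefix_clique[OF p])
qed

section \<open>Frozen colorings\<close>

lemma missing_color:
  fixes a b c :: nat
  assumes "distinct [a, b, c]" "{a, b, c} \<subseteq> {1..4}"
  shows "{1..4} - {a, b, c} = {10 - a - b - c}"
proof -
  have "a \<in> {1, 2, 3, 4}" "b \<in> {1, 2, 3, 4}" "c \<in> {1, 2, 3, 4}" using assms(2) by auto
  moreover have "{1..4::nat} = {1, 2, 3, 4}" by auto
  ultimately show ?thesis using assms(1) by (elim insertE emptyE) (simp_all, auto)
qed

lemma permutations_of_set_1_4E:
  assumes "xs \<in> permutations_of_set {1..4::nat}"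
  obtains a b c d where "xs = [a, b, c, d]" "distinct xs" "set xs = {1..4}"
proof -
  have "distinct xs" "set xs = {1..4}" using assms by (auto simp: permutations_of_set_def)
  moreover from this have "length xs = 4" using distinct_card by fastforce
  then obtain a b c d where "xs = [a, b, c, d]" by (auto simp: numeral_eq_Suc length_Suc_conv)
  ultimately show ?thesis using that by blast
qed

text \<open>The colors of \<open>v\<^sub>k\<^sub>-\<^sub>3, v\<^sub>k\<^sub>-\<^sub>2, v\<^sub>k\<^sub>-\<^sub>1\<close> are distinct, so the missing one is
  \<open>10\<close> minus their sum.\<close>
fun frozen_color :: "nat list \<Rightarrow> nat set \<Rightarrow> nat \<Rightarrow> nat" where
  "frozen_color xs w k =
     (if k < 4 then xs ! k
      else if k \<in> w then frozen_color xs w (k - 3)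
      else 10 - frozen_color xs w (k - 1) - frozen_color xs w (k - 2) - frozen_color xs w (k - 3))"

declare frozen_color.simps [simp del]

lemma frozen_color_prefix: "k < 4 \<Longrightarrow> frozen_color xs w k = xs ! k"
  by (subst frozen_color.simps) simp

lemma frozen_color_repeat: "4 \<le> k \<Longrightarrow> k \<in> w \<Longrightarrow> frozen_color xs w k = frozen_color xs w (k - 3)"
  by (subst frozen_color.simps) simp

lemma frozen_color_missing:
  "4 \<le> k \<Longrightarrow> k \<notin> w \<Longrightarrow>
    frozen_color xs w k = 10 - frozen_color xs w (k - 1) - frozen_color xs w (k - 2) - frozen_color xs w (k - 3)"
  by (subst frozen_color.simps) simp

lemma frozen_color_window:
  fixes w :: "nat set"
  assumes xs: "xs \<in> permutations_of_set {1..4}"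
  defines "s \<equiv> frozen_color xs w"
  shows "distinct [s k, s (k + 1), s (k + 2)] \<and> {s k, s (k + 1), s (k + 2)} \<subseteq> {1..4}"
proof -
  from xs obtain a b c d where xs_eq: "xs = [a, b, c, d]" "distinct xs" "set xs = {1..4}"
    by (rule permutations_of_set_1_4E)
  show ?thesis
  proof (induction k)
    case 0
    show ?case using xs_eq by (auto simp: s_def frozen_color_prefix)
  next
    case (Suc k)
    show ?case
    proof (cases "k = 0")
      case True
      then show ?thesis using xs_eq by (auto simp: s_def frozen_color_prefix numeral_eq_Suc)
    next
      case False
      then have k: "4 \<le> k + 3" by simp
      have "s (k + 3) \<in> {1..4} - {s (k + 1), s (k + 2)}"
      proof (cases "k + 3 \<in> w")
        case True
        then have "s (k + 3) = s k" using k by (simp add: s_def frozen_color_repeat)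
        with Suc.IH show ?thesis by auto
      next
        case False
        then have "s (k + 3) = 10 - s k - s (k + 1) - s (k + 2)"
          using k by (simp add: s_def frozen_color_missing)
        then have "{1..4} - {s k, s (k + 1), s (k + 2)} = {s (k + 3)}"
          using Suc.IH missing_color[of "s k" "s (k + 1)" "s (k + 2)"] by simp
        then show ?thesis by blast
      qed
      with Suc.IH show ?thesis by (auto simp: numeral_eq_Suc)
    qed
  qed
qed

lemma frozen_color_range: "xs \<in> permutations_of_set {1..4} \<Longrightarrow> frozen_color xs w k \<in> {1..4}"
  using frozen_color_window[of xs w k] by simp

lemma frozen_color_neq:
  assumes "xs \<in> permutations_of_set {1..4}"
  shows "frozen_color xs w k \<noteq> frozen_color xs w (k + 1)"
    and "frozen_color xs w k \<noteq> frozen_color xs w (k + 2)"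
  using frozen_color_window[OF assms, of w k] by simp_all

lemma frozen_color_fresh:
  assumes xs: "xs \<in> permutations_of_set {1..4}" and "0 < m" "m + 3 \<notin> w"
  defines "s \<equiv> frozen_color xs w"
  shows "{1..4} - {s m, s (m + 1), s (m + 2)} = {s (m + 3)}"
proof -
  have "s (m + 3) = 10 - s m - s (m + 1) - s (m + 2)"
    using assms(2,3) by (simp add: s_def frozen_color_missing)
  then show ?thesis using frozen_color_window[OF xs, of w m] missing_color[of "s m" "s (m + 1)" "s (m + 2)"]
    by (simp add: s_def)
qed

lemma frozen_color_repeat_iff:
  assumes xs: "xs \<in> permutations_of_set {1..4}" and "0 < m"
  shows "frozen_color xs w (m + 3) = frozen_color xs w m \<longleftrightarrow> m + 3 \<in> w"
proof
  assume "frozen_color xs w (m + 3) = frozen_color xs w m"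
  then show "m + 3 \<in> w" using frozen_color_fresh[OF xs \<open>0 < m\<close>, of w] by blast
qed (use \<open>0 < m\<close> in \<open>simp add: frozen_color_repeat\<close>)

definition frozen_coloring :: "nat \<Rightarrow> nat list \<Rightarrow> nat set \<Rightarrow> nat \<Rightarrow> nat" where
  "frozen_coloring p xs w = restrict (frozen_color xs w) {0..<p}"

lemma frozen_coloring_in_GI_colorings:
  assumes p: "4 \<le> p" and xs: "xs \<in> permutations_of_set {1..4}"
  shows "frozen_coloring p xs w \<in> GI_colorings p"
proof -
  let ?s = "frozen_color xs w"
  from xs obtain a b c d where "xs = [a, b, c, d]" "distinct xs" "set xs = {1..4}"
    by (rule permutations_of_set_1_4E)
  then have s03: "?s 0 \<noteq> ?s 3" by (simp add: frozen_color_prefix)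
  have "restrict ?s {0..<p} u \<noteq> restrict ?s {0..<p} v" if uv: "{u, v} \<in> GI_edges p" for u v
  proof -
    from uv have "u < p" "v < p" and "{u, v} = {0, 3} \<or> v = u + 1 \<or> u = v + 1 \<or> v = u + 2 \<or> u = v + 2"
      by (simp_all add: GI_edges_iff[OF p])
    then show ?thesis
      using s03 frozen_color_neq[OF xs, of w u] frozen_color_neq[OF xs, of w v]
      by (auto simp: doubleton_eq_iff)
  qed
  moreover have "restrict ?s {0..<p} \<in> {0..<p} \<rightarrow>\<^sub>E {1..4}"
    using frozen_color_range[OF xs] by simp
  ultimately show ?thesis by (simp add: colorings_def frozen_coloring_def GI_vertices_def)
qed

lemma frozen_coloring_prefix:
  assumes "4 \<le> p" and xs: "xs \<in> permutations_of_set {1..4}"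
  shows "map (frozen_coloring p xs w) [0, 1, 2, 3] = xs"
proof -
  from xs obtain a b c d where "xs = [a, b, c, d]" "distinct xs" "set xs = {1..4}"
    by (rule permutations_of_set_1_4E)
  with \<open>4 \<le> p\<close> show ?thesis by (simp add: frozen_coloring_def frozen_color_prefix)
qed

lemma frozen_coloring_inj:
  assumes xs: "xs \<in> permutations_of_set {1..4}" and "w \<subseteq> {4..<p}" "w' \<subseteq> {4..<p}"
    and eq: "frozen_coloring p xs w = frozen_coloring p xs w'"
  shows "w = w'"
proof -
  have same: "frozen_color xs w k = frozen_color xs w' k" if "k < p" for k
    using fun_cong[OF eq, of k] that by (simp add: frozen_coloring_def)
  have "k \<in> w \<longleftrightarrow> k \<in> w'" if "k \<in> {4..<p}" for k
  proof -
    define m where "m = k - 3"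
    with that have "k = m + 3" "0 < m" "m < p" by auto
    moreover have "frozen_color xs w (m + 3) = frozen_color xs w' (m + 3)"
      "frozen_color xs w m = frozen_color xs w' m" using same \<open>m < p\<close> \<open>k = m + 3\<close> that by auto
    ultimately show ?thesis
      using frozen_color_repeat_iff[OF xs \<open>0 < m\<close>, of w] frozen_color_repeat_iff[OF xs \<open>0 < m\<close>, of w']
      by simp
  qed
  with assms(2,3) show ?thesis by blast
qed

text \<open>Away from the last two vertices, every vertex sees all four colors in its closed
  neighborhood: of two consecutive vertices \<open>m + 3, m + 4\<close> at most one lies in \<open>w\<close>, and the
  other one completes a window of four distinct colors.\<close>
lemma frozen_coloring_locked:
  assumes p: "4 \<le> p" and xs: "xs \<in> permutations_of_set {1..4}"
    and sparse: "\<And>k. k \<in> w \<Longrightarrow> k + 1 \<notin> w"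
    and adj: "(frozen_coloring p xs w, \<beta>) \<in> GI_color_adj p" and "v + 2 < p"
  shows "frozen_coloring p xs w v = \<beta> v"
proof (cases "v < 4")
  case True
  with GI_color_adj_prefix[OF p adj] show ?thesis by simp
next
  case False
  define m where "m = v - 2"
  with False have v: "v = m + 2" "0 < m" by auto
  let ?s = "frozen_color xs w" and ?N = "{m, m + 1, m + 3, m + 4}"
  have "{1..4} \<subseteq> insert (?s v) (?s ` ?N)"
  proof (cases "m + 3 \<in> w")
    case False
    with frozen_color_fresh[OF xs \<open>0 < m\<close>]
    have "{1..4} \<subseteq> {?s m, ?s (m + 1), ?s (m + 2), ?s (m + 3)}" by blast
    with v show ?thesis by blast
  next
    case True
    then have "m + 1 + 3 \<notin> w" using sparse[of "m + 3"] by (simp add: ac_simps)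
    with frozen_color_fresh[OF xs, of "m + 1" w]
    have "{1..4} \<subseteq> {?s (m + 1), ?s (m + 1 + 1), ?s (m + 1 + 2), ?s (m + 1 + 3)}" by simp blast
    moreover have "m + 1 + 1 = m + 2" "m + 1 + 2 = m + 3" "m + 1 + 3 = m + 4" by simp_all
    ultimately have "{1..4} \<subseteq> {?s (m + 1), ?s (m + 2), ?s (m + 3), ?s (m + 4)}" by (simp only:)
    with v show ?thesis by blast
  qed
  moreover have "frozen_coloring p xs w ` ?N = ?s ` ?N" "frozen_coloring p xs w v = ?s v"
    using \<open>v + 2 < p\<close> v by (auto simp: frozen_coloring_def)
  ultimately have "{1..4} \<subseteq> insert (frozen_coloring p xs w v) (frozen_coloring p xs w ` ?N)"
    by simp
  moreover have "{u, v} \<in> GI_edges p" if "u \<in> ?N" for u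
    using that v \<open>v + 2 < p\<close> p by (auto simp: GI_edges_iff)
  ultimately show ?thesis by (rule color_adj_locked[OF adj])
qed

lemma label_component_of_frozen_coloring:
  assumes p: "4 \<le> p" and xs: "xs \<in> permutations_of_set {1..4}"
    and sparse: "\<And>k. k \<in> w \<Longrightarrow> k + 1 \<notin> w"
  shows "label_component_of (GI_vertices p) (GI_edges p) 4 {p - 2, p - 1} (frozen_coloring p xs w)
    = {frozen_coloring p xs w}"
proof (rule label_component_of_isolated)
  fix \<beta>
  let ?\<alpha> = "frozen_coloring p xs w"
  assume adj: "(?\<alpha>, \<beta>) \<in> GI_color_adj p" and label: "restrict ?\<alpha> {p - 2, p - 1} = restrict \<beta> {p - 2, p - 1}"
  obtain v where "v \<in> GI_vertices p" "?\<alpha> v \<noteq> \<beta> v"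
    using adj by (rule color_adj_unique_diff)
  moreover have "?\<alpha> v = \<beta> v" if "v + 2 < p"
    using frozen_coloring_locked[OF p xs sparse adj that] .
  moreover have "?\<alpha> v = \<beta> v" if "v \<in> {p - 2, p - 1}"
    using fun_cong[OF label, of v] that by simp
  ultimately show False by (force simp: GI_vertices_def)
qed

section \<open>Connectivity of colorings with a common prefix\<close>

text \<open>Beyond \<open>j\<close>, vertex \<open>k\<close> is sent to the vertex among \<open>j - 2, j - 1, j\<close> that is congruent
  to \<open>k\<close> modulo 3.\<close>
definition periodic_index :: "nat \<Rightarrow> nat \<Rightarrow> nat" where
  "periodic_index j k = (if k \<le> j then k else j - 2 + (k - (j - 2)) mod 3)"

lemma periodic_index:
  assumes "2 \<le> j"
  shows "periodic_index j k \<le> j"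
    and "j - 2 \<le> k \<Longrightarrow> j - 2 \<le> periodic_index j k"
    and "j - 2 \<le> k \<Longrightarrow> periodic_index j k mod 3 = k mod 3"
proof -
  obtain i where j: "j = i + 2" using assms by (metis add.commute le_Suc_ex)
  have "(k - i) mod 3 \<le> 2" using mod_less_divisor[of 3 "k - i"] by linarith
  then show "periodic_index j k \<le> j" by (simp add: periodic_index_def j)
  show "j - 2 \<le> k \<Longrightarrow> j - 2 \<le> periodic_index j k" by (simp add: periodic_index_def j)
  show "j - 2 \<le> k \<Longrightarrow> periodic_index j k mod 3 = k mod 3"
    by (simp add: periodic_index_def j mod_add_right_eq)
qed

lemma periodic_index_next:
  assumes "2 \<le> j"
  shows "periodic_index j (j + 1) = j - 2" and "periodic_index j (j + 2) = j - 1"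
proof -
  obtain i where j: "j = i + 2" using assms by (metis add.commute le_Suc_ex)
  show "periodic_index j (j + 1) = j - 2" "periodic_index j (j + 2) = j - 1"
    by (simp_all add: periodic_index_def j)
qed

lemma periodic_extension_in_GI_colorings:
  assumes p: "4 \<le> p" and \<alpha>: "\<alpha> \<in> GI_colorings p" and j: "4 \<le> j" "j < p"
  shows "restrict (\<alpha> \<circ> periodic_index j) {0..<p} \<in> GI_colorings p"
proof -
  let ?r = "periodic_index j"
  have r_le: "?r k \<le> j" for k using j by (simp add: periodic_index)
  have proper: "\<alpha> (?r u) \<noteq> \<alpha> (?r v)" if uv: "{u, v} \<in> GI_edges p" for u v
  proof (cases "u \<le> j \<and> v \<le> j")
    case True
    with uv show ?thesis by (simp add: periodic_index_def coloringsD(2)[OF \<alpha>])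
  next
    case False
    with uv j have near: "v = u + 1 \<or> u = v + 1 \<or> v = u + 2 \<or> u = v + 2"
      by (auto simp: GI_edges_iff[OF p] doubleton_eq_iff)
    with False have "j - 2 \<le> u" "j - 2 \<le> v" by auto
    moreover from near have "u mod 3 \<noteq> v mod 3" by (elim disjE) presburger+
    moreover have "2 \<le> j" using j by simp
    ultimately have "j - 2 \<le> ?r u" "j - 2 \<le> ?r v" "?r u \<noteq> ?r v"
      using periodic_index(2,3) by metis+
    with r_le[of u] r_le[of v] j have "?r u < p" "?r v < p"
      and "?r v = ?r u + 1 \<or> ?r u = ?r v + 1 \<or> ?r v = ?r u + 2 \<or> ?r u = ?r v + 2"
      by linarith+
    then have "{?r u, ?r v} \<in> GI_edges p" unfolding GI_edges_iff[OF p] by blast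
    then show ?thesis using coloringsD(2)[OF \<alpha>] by blast
  qed
  have "\<alpha> (?r k) \<in> {1..4}" for k
    using coloringsD(1)[OF \<alpha>] r_le[of k] j by (auto simp: GI_vertices_def)
  then have "restrict (\<alpha> \<circ> ?r) {0..<p} \<in> {0..<p} \<rightarrow>\<^sub>E {1..4}" by simp
  moreover have "restrict (\<alpha> \<circ> ?r) {0..<p} u \<noteq> restrict (\<alpha> \<circ> ?r) {0..<p} v"
    if "{u, v} \<in> GI_edges p" for u v
    using that proper GI_edges_iff[OF p] by simp
  ultimately show ?thesis by (simp add: colorings_def GI_vertices_def)
qed

text \<open>Induction step: recolor \<open>v\<^sub>j\<close> after first making everything beyond \<open>v\<^sub>j\<close> periodic, so
  that the neighbors of \<open>v\<^sub>j\<close> use only the colors of \<open>v\<^sub>j\<^sub>-\<^sub>2\<close> and \<open>v\<^sub>j\<^sub>-\<^sub>1\<close>.\<close>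
lemma GI_colorings_connected:
  assumes p: "4 \<le> p"
  shows "\<alpha> \<in> GI_colorings p \<Longrightarrow> \<tau> \<in> GI_colorings p \<Longrightarrow> 4 \<le> j \<Longrightarrow> \<forall>i<j. \<alpha> i = \<tau> i
    \<Longrightarrow> (\<alpha>, \<tau>) \<in> (GI_color_adj p)\<^sup>*"
proof (induction "p - j" arbitrary: j \<alpha> \<tau>)
  case 0
  have "\<alpha> = \<tau>"
  proof
    fix i
    show "\<alpha> i = \<tau> i"
    proof (cases "i < p")
      case False
      then have "i \<notin> GI_vertices p" by (simp add: GI_vertices_def)
      then show ?thesis
        using PiE_arb[OF coloringsD(1)[OF "0.prems"(1)]] PiE_arb[OF coloringsD(1)[OF "0.prems"(2)]]
        by simp
    qed (use "0.hyps" "0.prems"(4) in auto)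
  qed
  then show ?case by simp
next
  case (Suc n)
  note \<alpha> = Suc.prems(1) and \<tau> = Suc.prems(2) and j = Suc.prems(3) and agree = Suc.prems(4)
  have jp: "j < p" and n: "n = p - Suc j" using Suc.hyps(2) by auto
  show ?case
  proof (cases "\<alpha> j = \<tau> j")
    case True
    with agree have "\<forall>i<Suc j. \<alpha> i = \<tau> i" using less_Suc_eq by auto
    with Suc.hyps(1)[OF n \<alpha> \<tau>] j show ?thesis by simp
  next
    case False
    define \<gamma> where "\<gamma> = restrict (\<alpha> \<circ> periodic_index j) {0..<p}"
    have \<gamma>: "\<gamma> \<in> GI_colorings p"
      unfolding \<gamma>_def using periodic_extension_in_GI_colorings[OF p \<alpha> j jp] .
    have \<gamma>_prefix: "\<gamma> i = \<alpha> i" if "i < Suc j" for i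
      using that jp by (simp add: \<gamma>_def periodic_index_def)
    have \<gamma>_next: "j + 1 < p \<Longrightarrow> \<gamma> (j + 1) = \<alpha> (j - 2)" "j + 2 < p \<Longrightarrow> \<gamma> (j + 2) = \<alpha> (j - 1)"
      using j periodic_index_next[of j] by (simp_all add: \<gamma>_def)
    have \<tau>_prev: "\<tau> (j - 2) \<noteq> \<tau> j" "\<tau> (j - 1) \<noteq> \<tau> j"
      using coloringsD(2)[OF \<tau>] GI_edges_upper[OF p j] jp by auto
    have agree_prev: "\<gamma> (j - 2) = \<tau> (j - 2)" "\<gamma> (j - 1) = \<tau> (j - 1)"
      using agree j \<gamma>_prefix[of "j - 2"] \<gamma>_prefix[of "j - 1"] by simp_all
    have free: "\<gamma> u \<noteq> \<tau> j" if "{u, j} \<in> GI_edges p" for u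
    proof -
      from that have "u < p" "u \<in> {j - 2, j - 1, j + 1, j + 2}"
        using GI_edges_upper[OF p j, of u] by simp_all
      then consider "u = j - 2" | "u = j - 1" | "u = j + 1" "j + 1 < p" | "u = j + 2" "j + 2 < p"
        by auto
      then show ?thesis
        using agree_prev \<tau>_prev \<gamma>_next agree j by cases auto
    qed
    define \<gamma>' where "\<gamma>' = \<gamma>(j := \<tau> j)"
    have \<gamma>': "\<gamma>' \<in> GI_colorings p"
    proof (unfold \<gamma>'_def, rule colorings_fun_upd[OF \<gamma>])
      show "j \<in> GI_vertices p" "\<tau> j \<in> {1..4}"
        using jp PiE_mem[OF coloringsD(1)[OF \<tau>]] by (simp_all add: GI_vertices_def)
    qed (rule free)
    have "(\<gamma>, \<gamma>') \<in> GI_color_adj p"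
      unfolding \<gamma>'_def using color_adj_fun_upd[OF \<gamma> \<gamma>'[unfolded \<gamma>'_def]] False \<gamma>_prefix jp
      by (simp add: GI_vertices_def)
    moreover have "(\<alpha>, \<gamma>) \<in> (GI_color_adj p)\<^sup>*"
    proof (rule Suc.hyps(1)[OF n \<alpha> \<gamma>])
      show "\<forall>i<Suc j. \<alpha> i = \<gamma> i" using \<gamma>_prefix by simp
    qed (use j in simp)
    moreover have "(\<gamma>', \<tau>) \<in> (GI_color_adj p)\<^sup>*"
    proof (rule Suc.hyps(1)[OF n \<gamma>' \<tau>])
      show "\<forall>i<Suc j. \<gamma>' i = \<tau> i"
        using \<gamma>_prefix agree by (auto simp: \<gamma>'_def less_Suc_eq)
    qed (use j in simp)
    ultimately show ?thesis by (meson rtrancl_into_rtrancl rtrancl_trans)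
  qed
qed

section \<open>Counting components\<close>

lemma card_contracted_component_of_frozen_coloring:
  assumes p: "4 \<le> p" and xs: "xs \<in> permutations_of_set {1..4}"
    and S: "S \<subseteq> {4..<p}" and sparse: "\<And>k. k \<in> S \<Longrightarrow> k + 1 \<notin> S"
  shows "2 ^ card S \<le> card (contracted_component_of (GI_vertices p) (GI_edges p) 4 {p - 2, p - 1}
    (frozen_coloring p xs {}))" (is "_ \<le> card ?X")
proof -
  let ?lc = "label_component_of (GI_vertices p) (GI_edges p) 4 {p - 2, p - 1}"
  have in_X: "{frozen_coloring p xs w} \<in> ?X" if "w \<subseteq> S" for w
  proof -
    have "\<forall>i<4. frozen_coloring p xs {} i = frozen_coloring p xs w i"
      using p by (simp add: frozen_coloring_def frozen_color_prefix)
    then have "(frozen_coloring p xs {}, frozen_coloring p xs w) \<in> (GI_color_adj p)\<^sup>*"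
      using GI_colorings_connected[OF p] frozen_coloring_in_GI_colorings[OF p xs] by blast
    then have "?lc (frozen_coloring p xs w) \<in> ?X"
      using label_component_of_in_contracted_component_of frozen_coloring_in_GI_colorings[OF p xs] by blast
    moreover have "\<And>k. k \<in> w \<Longrightarrow> k + 1 \<notin> w" using sparse that by blast
    ultimately show ?thesis using label_component_of_frozen_coloring[OF p xs] by simp
  qed
  have "inj_on (\<lambda>w. {frozen_coloring p xs w}) (Pow S)"
  proof (rule inj_onI)
    fix w w' assume "w \<in> Pow S" "w' \<in> Pow S" "{frozen_coloring p xs w} = {frozen_coloring p xs w'}"
    then show "w = w'" using frozen_coloring_inj[OF xs, of w p w'] S by auto
  qed
  moreover have "finite S" using S finite_subset by blast
  ultimately have "card ((\<lambda>w. {frozen_coloring p xs w}) ` Pow S) = 2 ^ card S"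
    by (simp add: card_image card_Pow)
  moreover have "finite ?X"
    using finite_contracted_components(2) contracted_component_of_in_contracted_components
      frozen_coloring_in_GI_colorings[OF p xs] by (metis GI_vertices_def finite_atLeastLessThan)
  ultimately show ?thesis using in_X by (metis card_mono image_subsetI PowD)
qed

lemma inj_on_contracted_component_of_frozen_coloring:
  assumes p: "4 \<le> p"
  shows "inj_on (\<lambda>xs. contracted_component_of (GI_vertices p) (GI_edges p) 4 T (frozen_coloring p xs {}))
    (permutations_of_set {1..4})"
proof (rule inj_onI)
  fix xs ys
  assume xs: "xs \<in> permutations_of_set {1..4}" and ys: "ys \<in> permutations_of_set {1..4}"
    and eq: "contracted_component_of (GI_vertices p) (GI_edges p) 4 T (frozen_coloring p xs {})
      = contracted_component_of (GI_vertices p) (GI_edges p) 4 T (frozen_coloring p ys {})"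
  have "map (frozen_coloring p xs {}) [0, 1, 2, 3] = map (frozen_coloring p ys {}) [0, 1, 2, 3]"
  proof (rule contracted_component_of_invariant[OF _ _ _ eq])
    show "map \<alpha> [0, 1, 2, 3] = map \<beta> [0, 1, 2, 3]" if "(\<alpha>, \<beta>) \<in> GI_color_adj p" for \<alpha> \<beta>
      using GI_color_adj_prefix[OF p that] by simp
  qed (use frozen_coloring_in_GI_colorings[OF p xs] frozen_coloring_in_GI_colorings[OF p ys] in simp_all)
  then show "xs = ys" by (metis frozen_coloring_prefix[OF p xs] frozen_coloring_prefix[OF p ys])
qed

theorem proposition5:
  fixes p q :: nat
  assumes "p = 4 * q + 4"
  shows "card {X \<in> contracted_components (GI_vertices p) (GI_edges p) 4 {p - 2, p - 1}.
                 card X \<ge> 2 ^ q} \<ge> fact 4"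
proof -
  let ?T = "{p - 2, p - 1}"
  let ?X = "\<lambda>xs. contracted_component_of (GI_vertices p) (GI_edges p) 4 ?T (frozen_coloring p xs {})"
  let ?large = "{X \<in> contracted_components (GI_vertices p) (GI_edges p) 4 ?T. card X \<ge> 2 ^ q}"
  define S where "S = (\<lambda>m. 2 * m + 4) ` {..<q}"
  have p: "4 \<le> p" using assms by simp
  have S: "S \<subseteq> {4..<p}" "card S = q" "\<And>k. k \<in> S \<Longrightarrow> k + 1 \<notin> S"
    using assms by (auto simp: S_def card_image inj_on_def) presburger
  have "fact 4 = card (permutations_of_set {1..4::nat})"
    by (simp add: card_permutations_of_set)
  also have "\<dots> = card (?X ` permutations_of_set {1..4})"
    using inj_on_contracted_component_of_frozen_coloring[OF p] by (simp add: card_image)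
  also have "\<dots> \<le> card ?large"
  proof (rule card_mono)
    show "finite ?large"
      by (rule finite_subset[OF _ finite_contracted_components(1)]) (auto simp: GI_vertices_def)
    have "?X xs \<in> ?large" if xs: "xs \<in> permutations_of_set {1..4}" for xs
      using contracted_component_of_in_contracted_components[OF frozen_coloring_in_GI_colorings[OF p xs]]
        card_contracted_component_of_frozen_coloring[OF p xs S(1,3)] S(2)
      by simp
    then show "?X ` permutations_of_set {1..4} \<subseteq> ?large" by blast
  qed
  finally show ?thesis .
qed

end
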